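(* Let $S,T$ be numberings of shape $\lambda\vdash n$, let $1\le i\le \ell(\lambda)-1$, and let $Q$ be a nonempty subset of the entries in row $i+1$ of $S$. Define \[ \gamma_Q^T(S)=\sum_{U\in \Xi_{i,Q}(S)}\sigma_{U,T}\,a_U\in \widetilde{\mathcal M}^T . \] Then $\gamma_Q^T(S)\in\ker\Psi^T$.
   Context: Permutations in $\mathfrak S_n$ act on $[n]$, products are compositions $(\sigma\tau)(k)=\sigma(\tau(k))$. A numbering of shape $\lambda\vdash n$ is a filling of the Young diagram of $\lambda$ (rows indexed top to bottom; $\ell(\lambda)$ = number of rows) with $1,\dots,n$, each exactly once. For $\pi\in\mathfrak S_n$, $\pi\cdot T$ replaces each entry $k$ by $\pi(k)$; $\sigma_{T,S}$ is the unique permutation with $\sigma_{T,S}\cdot T=S$. $R(T)$, $C(T)$ are the row and column groups; $a_T=\sum_{\rho\in R(T)}\rho$, $b_T=\sum_{\zeta\in C(T)}\operatorname{sgn}(\zeta)\zeta$. Let $\widetilde{\mathcal M}^T=a_T\,\mathbb C[\mathfrak S_n]$ be the right $\mathbb C[\mathfrak S_n]$-submodule generated by $a_T$ (note $\sigma_{U,T}a_U=a_T\sigma_{U,T}\in\widetilde{\mathcal M}^T$), and let $\Psi^T:\widetilde{\mathcal M}^T\to\mathbb C[\mathfrak S_n]$ be the right-module homomorphism $a_Tx\mapsto b_Ta_Tx$. The set $\Xi_{i,Q}(S)$ consists of the numberings obtained from $S$ as follows, one for each pair $(A,B)$ with $A\subseteq Q$, $B$ a subset of the entries of row $i$ of $S$,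 and $|A|=|B|$ (possibly $A=B=\emptyset$): the entries of $A$ are moved to the positions of row $i$ previously occupied by $B$, and the entries of $B$ to the positions of row $i+1$ previously occupied by $A$, preserving relative order (the $k$-th leftmost element of $A$ goes to the position of the $k$-th leftmost element of $B$ and vice versa). *)

theory Defs
  imports Complex_Main "HOL-Combinatorics.Permutations" "HOL-Library.Function_Algebras"
begin

(* Rows and columns are 1-indexed; row r has length lam!(r-1). *)
definition cells :: "nat list \<Rightarrow> (nat \<times> nat) set" where
  "cells lam = {(r,c). 1 \<le> r \<and> r \<le> length lam \<and> 1 \<le> c \<and> c \<le> lam ! (r - 1)}"

definition is_partition :: "nat list \<Rightarrow> nat \<Rightarrow> bool" where
  "is_partition lam n \<longleftrightarrow> sorted_wrt (\<ge>) lam \<and> (\<forall>x\<in>set lam. 0 < x) \<and> sum_list lam = n"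

definition numbering :: "nat \<Rightarrow> nat list \<Rightarrow> (nat \<times> nat \<Rightarrow> nat) \<Rightarrow> bool" where
  "numbering n lam T \<longleftrightarrow> bij_betw T (cells lam) {1..n}"

definition row_entries :: "nat list \<Rightarrow> (nat \<times> nat \<Rightarrow> nat) \<Rightarrow> nat \<Rightarrow> nat set" where
  "row_entries lam T r = T ` {x \<in> cells lam. fst x = r}"

definition col_entries :: "nat list \<Rightarrow> (nat \<times> nat \<Rightarrow> nat) \<Rightarrow> nat \<Rightarrow> nat set" where
  "col_entries lam T c = T ` {x \<in> cells lam. snd x = c}"

definition perms :: "nat \<Rightarrow> (nat \<Rightarrow> nat) set" where
  "perms n = {p. p permutes {1..n}}"

definition row_group :: "nat \<Rightarrow> nat list \<Rightarrow> (nat \<times> nat \<Rightarrow> nat) \<Rightarrow> (nat \<Rightarrow> nat) set" where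
  "row_group n lam T = {p \<in> perms n. \<forall>r. p ` row_entries lam T r = row_entries lam T r}"

definition col_group :: "nat \<Rightarrow> nat list \<Rightarrow> (nat \<times> nat \<Rightarrow> nat) \<Rightarrow> (nat \<Rightarrow> nat) set" where
  "col_group n lam T = {p \<in> perms n. \<forall>c. p ` col_entries lam T c = col_entries lam T c}"

(* group algebra C[S_n]: functions (nat => nat) => complex supported on perms n *)
type_synonym galg = "(nat \<Rightarrow> nat) \<Rightarrow> complex"

definition CS :: "nat \<Rightarrow> galg set" where
  "CS n = {x. \<forall>g. g \<notin> perms n \<longrightarrow> x g = 0}"

definition delta :: "(nat \<Rightarrow> nat) \<Rightarrow> galg" where
  "delta p = (\<lambda>q. if q = p then 1 else 0)"

(* product in C[S_n]; (sigma tau)(k) = sigma (tau k), i.e. sigma \<circ> tau *)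
definition gmult :: "nat \<Rightarrow> galg \<Rightarrow> galg \<Rightarrow> galg" where
  "gmult n x y = (\<lambda>g. if g \<in> perms n then (\<Sum>h\<in>perms n. x h * y (inv h \<circ> g)) else 0)"

definition a_elt :: "nat \<Rightarrow> nat list \<Rightarrow> (nat \<times> nat \<Rightarrow> nat) \<Rightarrow> galg" where
  "a_elt n lam T = (\<lambda>g. if g \<in> row_group n lam T then 1 else 0)"

definition b_elt :: "nat \<Rightarrow> nat list \<Rightarrow> (nat \<times> nat \<Rightarrow> nat) \<Rightarrow> galg" where
  "b_elt n lam T = (\<lambda>g. if g \<in> col_group n lam T then of_int (sign g) else 0)"

definition sigma :: "nat \<Rightarrow> nat list \<Rightarrow> (nat \<times> nat \<Rightarrow> nat) \<Rightarrow> (nat \<times> nat \<Rightarrow> nat) \<Rightarrow> (nat \<Rightarrow> nat)" where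
  "sigma n lam T S = (THE s. s permutes {1..n} \<and> (\<forall>x\<in>cells lam. s (T x) = S x))"

definition Mt :: "nat \<Rightarrow> nat list \<Rightarrow> (nat \<times> nat \<Rightarrow> nat) \<Rightarrow> galg set" where
  "Mt n lam T = {gmult n (a_elt n lam T) x | x. x \<in> CS n}"

definition Psi :: "nat \<Rightarrow> nat list \<Rightarrow> (nat \<times> nat \<Rightarrow> nat) \<Rightarrow> galg \<Rightarrow> galg" where
  "Psi n lam T m = gmult n (b_elt n lam T) m"

definition ker_Psi :: "nat \<Rightarrow> nat list \<Rightarrow> (nat \<times> nat \<Rightarrow> nat) \<Rightarrow> galg set" where
  "ker_Psi n lam T = {m \<in> Mt n lam T. Psi n lam T m = 0}"

definition cols_of :: "nat list \<Rightarrow> (nat \<times> nat \<Rightarrow> nat) \<Rightarrow> nat \<Rightarrow> nat set \<Rightarrow> nat list" where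
  "cols_of lam S r X = sorted_list_of_set {c. (r,c) \<in> cells lam \<and> S (r,c) \<in> X}"

(* move A (in row i+1) to the positions of B (in row i) and vice versa, order preserving *)
definition swap_num :: "nat list \<Rightarrow> nat \<Rightarrow> (nat \<times> nat \<Rightarrow> nat) \<Rightarrow> nat set \<Rightarrow> nat set \<Rightarrow> (nat \<times> nat \<Rightarrow> nat)" where
  "swap_num lam i S A B =
    (let cB = cols_of lam S i B; cA = cols_of lam S (Suc i) A in
     (\<lambda>(r,c). if r = i \<and> c \<in> set cB then S (Suc i, cA ! (THE k. k < length cB \<and> cB ! k = c))
             else if r = Suc i \<and> c \<in> set cA then S (i, cB ! (THE k. k < length cA \<and> cA ! k = c))
             else S (r,c)))"

definition Xi :: "nat list \<Rightarrow> nat \<Rightarrow> nat set \<Rightarrow> (nat \<times> nat \<Rightarrow> nat) \<Rightarrow> (nat \<times> nat \<Rightarrow> nat) set" where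
  "Xi lam i Q S = {swap_num lam i S A B | A B. A \<subseteq> Q \<and> B \<subseteq> row_entries lam S i \<and> card A = card B}"

definition gamma :: "nat \<Rightarrow> nat list \<Rightarrow> nat \<Rightarrow> nat set \<Rightarrow> (nat \<times> nat \<Rightarrow> nat) \<Rightarrow> (nat \<times> nat \<Rightarrow> nat) \<Rightarrow> galg" where
  "gamma n lam i Q T S = (\<Sum>U\<in>Xi lam i Q S. gmult n (delta (sigma n lam U T)) (a_elt n lam U))"

end

theory Submission
  imports Defs "HOL-Library.Indicator_Function"
begin

text \<open>
  Let X be the union of row i of S and Q, and H the stabiliser of row i in Sym(X). The map
  U \<mapsto> (row i of U) is a bijection from Xi_{i,Q}(S) onto the subsets of X of the size of row i,
  so the permutations sigma_{S,U} form a system of coset representatives of Sym(X)/H: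
  e_H * sum_U sigma_{S,U}^-1 = e_X, the sum over Sym(X). As H lies in the row group of S, this
  gives |H| a_S sum_U sigma_{S,U}^-1 = a_S e_X. Conjugating by sigma_{S,T} turns gamma into
  sigma_{S,T} a_S sum_U sigma_{S,U}^-1 = a_T sigma_{S,T} sum_U sigma_{S,U}^-1, an element of
  a_T C[S_n] whose image under Psi^T is sigma_{S,T} b_S a_S sum_U sigma_{S,U}^-1.

  This vanishes by the Garnir argument: for a row permutation rho, pick q in Q; the entry of
  row i in the column of rho(q) is rho(x) for some x in row i, so the column transposition c of
  rho(x) and rho(q) satisfies c rho = rho t with t = (x q) in Sym(X). Hence
  b_S rho e_X = b_S rho t e_X = b_S c rho e_X = - b_S rho e_X.
\<close>

subsection \<open>Permutations of {1..n} and the group algebra\<close>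

lemma sum_fun_apply: "sum F I x = (\<Sum>i\<in>I. F i x)"
  by (induction I rule: infinite_finite_induct) auto

lemma finite_perms: "finite (perms n)"
  unfolding perms_def by (rule finite_permutations) simp

lemma perms_comp: "p \<in> perms n \<Longrightarrow> q \<in> perms n \<Longrightarrow> p \<circ> q \<in> perms n"
  unfolding perms_def by (simp add: permutes_compose)

lemma perms_inv: "p \<in> perms n \<Longrightarrow> inv p \<in> perms n"
  unfolding perms_def by (simp add: permutes_inv)

lemma perms_bij: "p \<in> perms n \<Longrightarrow> bij p"
  unfolding perms_def by (simp add: permutes_bij)

lemma perms_permutation: "p \<in> perms n \<Longrightarrow> permutation p"
  unfolding perms_def using permutes_imp_permutation by blast

lemma perms_inv_o:
  assumes "p \<in> perms n"
  shows "p \<circ> inv p = id" "inv p \<circ> p = id"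
  using assms unfolding perms_def by (simp_all add: permutes_inv_o)

lemma perms_inv_cancel:
  assumes "p \<in> perms n"
  shows "inv p \<circ> (p \<circ> q) = q" "p \<circ> (inv p \<circ> q) = q" "q \<circ> p \<circ> inv p = q" "q \<circ> inv p \<circ> p = q"
  by (simp_all add: comp_assoc[symmetric] perms_inv_o[OF assms]) (simp_all add: comp_assoc perms_inv_o[OF assms])

lemma perms_inv_inv: "p \<in> perms n \<Longrightarrow> inv (inv p) = p"
  unfolding perms_def by (simp add: permutes_inv_inv)

lemma perms_inv_comp: "p \<in> perms n \<Longrightarrow> q \<in> perms n \<Longrightarrow> inv (p \<circ> q) = inv q \<circ> inv p"
  by (simp add: o_inv_distrib perms_bij)

lemma perms_comp_left_iff: "p \<in> perms n \<Longrightarrow> p \<circ> q \<in> perms n \<longleftrightarrow> q \<in> perms n"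
  by (metis perms_comp perms_inv perms_inv_cancel(1))

lemma perms_comp_right_iff: "p \<in> perms n \<Longrightarrow> q \<circ> p \<in> perms n \<longleftrightarrow> q \<in> perms n"
  by (metis perms_comp perms_inv perms_inv_cancel(3))

lemma permutes_image_eq:
  assumes h: "h permutes X" and XY: "h ` (X \<inter> Y) = X \<inter> Y"
  shows "h ` Y = Y"
proof -
  have "h ` (Y - X) = Y - X"
    using permutes_not_in[OF h] by (simp add: image_cong[of _ _ h id])
  then have "h ` ((X \<inter> Y) \<union> (Y - X)) = (X \<inter> Y) \<union> (Y - X)"
    using XY by (simp only: image_Un)
  then show ?thesis
    by (simp add: Un_Diff_Int[of Y X, simplified Int_commute[of Y X]] Un_commute)
qed

lemma permutes_image_eq_iff: "g permutes X \<Longrightarrow> g ` A = B \<longleftrightarrow> A = inv g ` B"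
  by (metis image_inv_f_f image_f_inv_f permutes_inj permutes_surj)

lemma sum_perms_translate: "k \<in> perms n \<Longrightarrow> (\<Sum>h\<in>perms n. f (k \<circ> h)) = sum f (perms n)"
  by (rule sum.reindex_bij_witness[of _ "\<lambda>h. inv k \<circ> h" "\<lambda>h. k \<circ> h"])
    (simp_all add: perms_inv_cancel perms_comp perms_inv)

lemma sum_perms_inv: "(\<Sum>h\<in>perms n. f (inv h)) = sum f (perms n)"
  by (rule sum.reindex_bij_witness[of _ inv inv]) (simp_all add: perms_inv_inv perms_inv)

lemma gmult_outside: "g \<notin> perms n \<Longrightarrow> gmult n x y g = 0"
  unfolding gmult_def by simp

lemma gmult_apply: "g \<in> perms n \<Longrightarrow> gmult n x y g = (\<Sum>h\<in>perms n. x h * y (inv h \<circ> g))"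
  unfolding gmult_def by simp

lemma gmult_apply_reindex:
  assumes g: "g \<in> perms n"
  shows "gmult n x y g = (\<Sum>k\<in>perms n. x (g \<circ> inv k) * y k)"
proof -
  have "gmult n x y g = (\<Sum>h\<in>perms n. x (g \<circ> h) * y (inv (g \<circ> h) \<circ> g))"
    using sum_perms_translate[OF g, of "\<lambda>h. x h * y (inv h \<circ> g)"] by (simp add: gmult_apply g)
  also have "\<dots> = (\<Sum>h\<in>perms n. x (g \<circ> h) * y (inv h))"
    using g by (intro sum.cong) (simp_all add: perms_inv_comp perms_inv_o comp_assoc)
  also have "\<dots> = (\<Sum>k\<in>perms n. x (g \<circ> inv k) * y k)"
    using sum_perms_inv[of "\<lambda>k. x (g \<circ> inv k) * y k"] by (simp add: perms_inv_inv)
  finally show ?thesis .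
qed

lemma gmult_assoc: "gmult n (gmult n x y) z = gmult n x (gmult n y z)"
proof
  fix g
  show "gmult n (gmult n x y) z g = gmult n x (gmult n y z) g"
  proof (cases "g \<in> perms n")
    case False then show ?thesis by (simp add: gmult_outside)
  next
    case g: True
    have "gmult n (gmult n x y) z g = (\<Sum>h\<in>perms n. \<Sum>k\<in>perms n. x k * y (inv k \<circ> h) * z (inv h \<circ> g))"
      by (simp add: gmult_apply g sum_distrib_right)
    also have "\<dots> = (\<Sum>k\<in>perms n. x k * (\<Sum>h\<in>perms n. y (inv k \<circ> h) * z (inv h \<circ> g)))"
      by (subst sum.swap) (simp add: sum_distrib_left mult.assoc)
    also have "\<dots> = (\<Sum>k\<in>perms n. x k * gmult n y z (inv k \<circ> g))"
    proof (rule sum.cong[OF refl])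
      fix k assume k: "k \<in> perms n"
      have "(\<Sum>h\<in>perms n. y (inv k \<circ> h) * z (inv h \<circ> g))
          = (\<Sum>h\<in>perms n. y (inv k \<circ> (k \<circ> h)) * z (inv (k \<circ> h) \<circ> g))"
        using sum_perms_translate[OF k, of "\<lambda>h. y (inv k \<circ> h) * z (inv h \<circ> g)"] by simp
      also have "\<dots> = gmult n y z (inv k \<circ> g)"
        using k g by (simp add: gmult_apply perms_comp perms_inv perms_inv_cancel perms_inv_comp comp_assoc)
      finally show "x k * (\<Sum>h\<in>perms n. y (inv k \<circ> h) * z (inv h \<circ> g)) = x k * gmult n y z (inv k \<circ> g)"
        by simp
    qed
    also have "\<dots> = gmult n x (gmult n y z) g"
      by (simp add: gmult_apply g)
    finally show ?thesis .
  qed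
qed

lemma gmult_sum_left: "gmult n (sum F I) y = (\<Sum>i\<in>I. gmult n (F i) y)"
  by (rule ext) (simp add: gmult_def sum_fun_apply sum_distrib_right sum.swap[of _ I])

lemma gmult_sum_right: "gmult n x (sum F I) = (\<Sum>i\<in>I. gmult n x (F i))"
  by (rule ext) (simp add: gmult_def sum_fun_apply sum_distrib_left sum.swap[of _ I])

lemma gmult_scale_left: "gmult n (\<lambda>g. c * x g) y = (\<lambda>g. c * gmult n x y g)"
  by (rule ext) (simp add: gmult_def sum_distrib_left mult.assoc)

lemma gmult_scale_right: "gmult n x (\<lambda>g. c * y g) = (\<lambda>g. c * gmult n x y g)"
  by (rule ext) (simp add: gmult_def sum_distrib_left mult.left_commute)

lemma gmult_zero_right: "gmult n x 0 = 0"
  by (rule ext) (simp add: gmult_def)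

lemma gmult_delta_left:
  assumes "p \<in> perms n"
  shows "gmult n (delta p) x = (\<lambda>g. if g \<in> perms n then x (inv p \<circ> g) else 0)"
proof
  fix g
  have "(\<Sum>h\<in>perms n. delta p h * x (inv h \<circ> g))
      = (\<Sum>h\<in>perms n. if h = p then x (inv h \<circ> g) else 0)"
    by (rule sum.cong) (simp_all add: delta_def)
  also have "\<dots> = x (inv p \<circ> g)"
    using assms by (simp add: finite_perms)
  finally show "gmult n (delta p) x g = (if g \<in> perms n then x (inv p \<circ> g) else 0)"
    by (simp add: gmult_def)
qed

lemma gmult_delta_right:
  assumes "p \<in> perms n"
  shows "gmult n x (delta p) = (\<lambda>g. if g \<in> perms n then x (g \<circ> inv p) else 0)"
proof
  fix g
  have "(\<Sum>k\<in>perms n. x (g \<circ> inv k) * delta p k)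
      = (\<Sum>k\<in>perms n. if k = p then x (g \<circ> inv k) else 0)"
    by (rule sum.cong) (simp_all add: delta_def)
  also have "\<dots> = x (g \<circ> inv p)"
    using assms by (simp add: finite_perms)
  finally show "gmult n x (delta p) g = (if g \<in> perms n then x (g \<circ> inv p) else 0)"
    by (simp add: gmult_apply_reindex gmult_outside)
qed

lemma gmult_delta_delta:
  assumes "p \<in> perms n" "q \<in> perms n"
  shows "gmult n (delta p) (delta q) = delta (p \<circ> q)"
proof
  fix g
  have "inv p \<circ> g = q \<longleftrightarrow> g = p \<circ> q"
    using assms by (metis perms_inv_cancel(1,2))
  then show "gmult n (delta p) (delta q) g = delta (p \<circ> q) g"
    unfolding gmult_delta_left[OF assms(1)] using assms by (auto simp: delta_def perms_comp)
qed

lemma gmult_delta_conj: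
  assumes p: "p \<in> perms n" and xy: "\<And>g. g \<in> perms n \<Longrightarrow> y g = x (inv p \<circ> g \<circ> p)"
  shows "gmult n (delta p) x = gmult n y (delta p)"
proof -
  have "y (g \<circ> inv p) = x (inv p \<circ> g)" if "g \<in> perms n" for g
    using that p by (simp add: xy perms_comp perms_inv perms_inv_o comp_assoc)
  then show ?thesis
    using p by (simp add: gmult_delta_left gmult_delta_right fun_eq_iff)
qed

lemma gmult_uminus_left: "gmult n (- x) y = - gmult n x y"
  by (rule ext) (simp add: gmult_def sum_negf)

lemma gmult_indicator_sum_delta_inv:
  assumes I: "finite I" and \<tau>: "\<And>j. j \<in> I \<Longrightarrow> \<tau> j \<in> perms n" and g: "g \<in> perms n"
  shows "gmult n (indicator K) (\<Sum>j\<in>I. delta (inv (\<tau> j))) g = of_nat (card {j\<in>I. g \<circ> \<tau> j \<in> K})"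
proof -
  have "gmult n (indicator K) (\<Sum>j\<in>I. delta (inv (\<tau> j))) g = (\<Sum>j\<in>I. of_bool (g \<circ> \<tau> j \<in> K))"
    unfolding gmult_sum_right sum_fun_apply
  proof (rule sum.cong[OF refl])
    fix j assume "j \<in> I"
    then show "gmult n (indicator K) (delta (inv (\<tau> j))) g = of_bool (g \<circ> \<tau> j \<in> K)"
      using g perms_inv[OF \<tau>] perms_inv_inv[OF \<tau>] by (simp add: gmult_delta_right indicator_def)
  qed
  also have "\<dots> = of_nat (card {j\<in>I. g \<circ> \<tau> j \<in> K})"
    using I by (simp add: Collect_conj_eq Int_commute)
  finally show ?thesis .
qed

lemma gmult_delta_indicator_permutes:
  assumes X: "X \<subseteq> {1..n}" and t: "t permutes X"
  shows "gmult n (delta t) (indicator {g. g permutes X}) = indicator {g. g permutes X}"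
proof
  fix g
  have tn: "t \<in> perms n"
    using permutes_subset[OF t X] unfolding perms_def by simp
  have "inv t \<circ> g permutes X \<longleftrightarrow> g permutes X"
  proof
    assume "inv t \<circ> g permutes X"
    then have "t \<circ> (inv t \<circ> g) permutes X"
      using permutes_compose t by blast
    then show "g permutes X"
      using tn by (simp add: perms_inv_cancel)
  qed (use t permutes_compose permutes_inv in blast)
  moreover have "g permutes X \<Longrightarrow> g \<in> perms n"
    using permutes_subset X unfolding perms_def by blast
  ultimately show "gmult n (delta t) (indicator {g. g permutes X}) g = indicator {g. g permutes X} g"
    using tn by (auto simp: gmult_delta_left indicator_def)
qed

subsection \<open>Stabilisers\<close>

definition stabiliser :: "nat \<Rightarrow> (nat \<Rightarrow> nat set) \<Rightarrow> (nat \<Rightarrow> nat) set" where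
  "stabiliser n E = {p \<in> perms n. \<forall>r. p ` E r = E r}"

lemma row_group_stabiliser: "row_group n lam S = stabiliser n (row_entries lam S)"
  unfolding row_group_def stabiliser_def ..

lemma col_group_stabiliser: "col_group n lam S = stabiliser n (col_entries lam S)"
  unfolding col_group_def stabiliser_def ..

lemma stabiliser_perms: "stabiliser n E \<subseteq> perms n"
  unfolding stabiliser_def by blast

lemma stabiliser_comp:
  assumes "p \<in> stabiliser n E" "q \<in> stabiliser n E"
  shows "p \<circ> q \<in> stabiliser n E"
proof -
  have "(p \<circ> q) ` E r = E r" for r
    unfolding image_comp[symmetric] using assms unfolding stabiliser_def by simp
  then show ?thesis
    using assms unfolding stabiliser_def by (simp add: perms_comp)
qed

lemma stabiliser_inv:
  assumes "p \<in> stabiliser n E"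
  shows "inv p \<in> stabiliser n E"
proof -
  have p: "p \<in> perms n" "\<And>r. p ` E r = E r"
    using assms unfolding stabiliser_def by auto
  have "inv p ` E r = E r" for r
    using image_inv_f_f[OF bij_is_inj[OF perms_bij[OF p(1)]], of "E r"] by (simp add: p(2))
  then show ?thesis
    unfolding stabiliser_def by (simp add: perms_inv p)
qed

lemma stabiliser_comp_right_iff:
  assumes q: "q \<in> stabiliser n E"
  shows "p \<circ> q \<in> stabiliser n E \<longleftrightarrow> p \<in> stabiliser n E"
proof
  assume "p \<circ> q \<in> stabiliser n E"
  then have "p \<circ> q \<circ> inv q \<in> stabiliser n E"
    using stabiliser_comp stabiliser_inv q by blast
  moreover have "q \<in> perms n"
    using q stabiliser_perms by blast
  ultimately show "p \<in> stabiliser n E"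
    by (simp add: perms_inv_cancel)
qed (use q stabiliser_comp in blast)

lemma stabiliser_conj_iff:
  assumes p: "p \<in> perms n"
  shows "g \<in> stabiliser n (\<lambda>r. p ` E r) \<longleftrightarrow> inv p \<circ> g \<circ> p \<in> stabiliser n E"
proof -
  have "g ` p ` E r = p ` E r \<longleftrightarrow> (inv p \<circ> g \<circ> p) ` E r = E r" for r
  proof -
    have "inj (inv p)"
      using perms_bij[OF perms_inv[OF p]] bij_is_inj by blast
    then have "g ` p ` E r = p ` E r \<longleftrightarrow> inv p ` g ` p ` E r = inv p ` p ` E r"
      by (simp add: inj_image_eq_iff)
    then show ?thesis
      by (simp add: image_comp perms_inv_o[OF p])
  qed
  moreover have "inv p \<circ> g \<circ> p \<in> perms n \<longleftrightarrow> g \<in> perms n"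
    using p by (simp add: perms_comp_left_iff perms_comp_right_iff perms_inv)
  ultimately show ?thesis
    unfolding stabiliser_def by auto
qed

lemma gmult_indicator_stabiliser:
  assumes "H \<subseteq> stabiliser n E"
  shows "gmult n (indicator (stabiliser n E)) (indicator H) = (\<lambda>g. of_nat (card H) * indicator (stabiliser n E) g)"
proof
  fix g
  let ?G = "stabiliser n E"
  show "gmult n (indicator ?G) (indicator H) g = of_nat (card H) * indicator ?G g"
  proof (cases "g \<in> perms n")
    case False
    then have "g \<notin> ?G"
      using stabiliser_perms by blast
    with False show ?thesis
      by (simp add: gmult_outside)
  next
    case g: True
    have shift: "indicator ?G (g \<circ> inv k) * indicator H k = (indicator ?G g * indicator H k :: complex)" for k
      using assms stabiliser_comp_right_iff[OF stabiliser_inv, of k n E g] by (auto simp: indicator_def)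
    have "gmult n (indicator ?G) (indicator H) g = indicator ?G g * (\<Sum>k\<in>perms n. indicator H k)"
      unfolding gmult_apply_reindex[OF g] shift sum_distrib_left ..
    also have "(\<Sum>k\<in>perms n. indicator H k :: complex) = of_nat (card H)"
      using assms stabiliser_perms[of n E] finite_perms[of n]
      by (simp add: sum_indicator_mult[of _ _ "\<lambda>_. 1", simplified] Int_absorb1)
    finally show ?thesis
      by simp
  qed
qed

lemma indicator_stabiliser_sum_delta: "indicator (stabiliser n E) = (\<Sum>\<rho>\<in>stabiliser n E. delta \<rho>)"
proof
  fix g
  have "finite (stabiliser n E)"
    using stabiliser_perms finite_perms finite_subset by blast
  then show "indicator (stabiliser n E) g = (\<Sum>\<rho>\<in>stabiliser n E. delta \<rho>) g"
    by (simp add: sum_fun_apply delta_def indicator_def)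
qed

subsection \<open>Numberings\<close>

lemma numbering_inj: "numbering n lam S \<Longrightarrow> inj_on S (cells lam)"
  unfolding numbering_def bij_betw_def by simp

lemma numbering_image: "numbering n lam S \<Longrightarrow> S ` cells lam = {1..n}"
  unfolding numbering_def bij_betw_def by simp

lemma numbering_eq_iff:
  "numbering n lam S \<Longrightarrow> x \<in> cells lam \<Longrightarrow> y \<in> cells lam \<Longrightarrow> S x = S y \<longleftrightarrow> x = y"
  using numbering_inj inj_on_eq_iff by metis

lemma row_entries_conj:
  "(\<And>x. x \<in> cells lam \<Longrightarrow> V x = p (U x)) \<Longrightarrow> row_entries lam V r = p ` row_entries lam U r"
  unfolding row_entries_def by (force simp: image_image)

lemma col_entries_conj:
  "(\<And>x. x \<in> cells lam \<Longrightarrow> V x = p (U x)) \<Longrightarrow> col_entries lam V c = p ` col_entries lam U c"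
  unfolding col_entries_def by (force simp: image_image)

lemma sign_conj:
  assumes p: "p \<in> perms n" and g: "g \<in> perms n"
  shows "sign (inv p \<circ> g \<circ> p) = sign g"
proof -
  have perm: "permutation (inv p)" "permutation g" "permutation p"
    using perms_permutation perms_inv p g by blast+
  have "sign (inv p \<circ> g \<circ> p) = sign (inv p) * sign g * sign p"
    using perm by (simp add: sign_compose permutation_compose)
  also have "\<dots> = sign g * (sign p * sign p)"
    using perms_permutation[OF p] by (simp add: sign_inverse)
  finally show ?thesis
    by (simp add: sign_idempotent)
qed

lemma a_elt_indicator: "a_elt n lam S = indicator (row_group n lam S)"
  by (simp add: a_elt_def indicator_def fun_eq_iff)

lemma a_elt_conj:
  assumes p: "p \<in> perms n" and V: "\<And>x. x \<in> cells lam \<Longrightarrow> V x = p (U x)"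
  shows "gmult n (delta p) (a_elt n lam U) = gmult n (a_elt n lam V) (delta p)"
proof (rule gmult_delta_conj[OF p])
  fix g
  have "row_entries lam V = (\<lambda>r. p ` row_entries lam U r)"
    by (rule ext, rule row_entries_conj) (rule V)
  then show "a_elt n lam V g = a_elt n lam U (inv p \<circ> g \<circ> p)"
    using stabiliser_conj_iff[OF p, of g "row_entries lam U"]
    by (simp add: a_elt_def row_group_stabiliser)
qed

lemma b_elt_conj:
  assumes p: "p \<in> perms n" and V: "\<And>x. x \<in> cells lam \<Longrightarrow> V x = p (U x)"
  shows "gmult n (delta p) (b_elt n lam U) = gmult n (b_elt n lam V) (delta p)"
proof (rule gmult_delta_conj[OF p])
  fix g assume g: "g \<in> perms n"
  have "col_entries lam V = (\<lambda>c. p ` col_entries lam U c)"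
    by (rule ext, rule col_entries_conj) (rule V)
  then show "b_elt n lam V g = b_elt n lam U (inv p \<circ> g \<circ> p)"
    using stabiliser_conj_iff[OF p, of g "col_entries lam U"]
    by (simp add: b_elt_def col_group_stabiliser sign_conj[OF p g])
qed

lemma gmult_b_elt_col_transposition:
  assumes "a \<noteq> b" and ct: "transpose a b \<in> col_group n lam S"
  shows "gmult n (b_elt n lam S) (delta (transpose a b)) = - b_elt n lam S"
proof
  fix g
  let ?C = "col_group n lam S" and ?t = "transpose a b"
  have t: "?t \<in> perms n"
    using ct stabiliser_perms by (auto simp: col_group_stabiliser)
  have "b_elt n lam S (g \<circ> ?t) = - b_elt n lam S g" if g: "g \<in> perms n"
  proof -
    have "g \<circ> ?t \<in> ?C \<longleftrightarrow> g \<in> ?C"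
      using stabiliser_comp_right_iff ct by (simp add: col_group_stabiliser)
    moreover have "sign (g \<circ> ?t) = - sign g"
      using assms(1) by (simp add: sign_compose[OF perms_permutation[OF g] perms_permutation[OF t]] sign_swap_id)
    ultimately show ?thesis
      by (simp add: b_elt_def)
  qed
  moreover have "b_elt n lam S g = 0" if "g \<notin> perms n"
    using that stabiliser_perms by (auto simp: b_elt_def col_group_stabiliser)
  ultimately show "gmult n (b_elt n lam S) (delta ?t) g = (- b_elt n lam S) g"
    using t by (simp add: gmult_delta_right)
qed

lemma sigma_unique:
  assumes U: "numbering n lam U" and s: "s permutes {1..n}" and sV: "\<And>x. x \<in> cells lam \<Longrightarrow> s (U x) = V x"
  shows "sigma n lam U V = s"
  unfolding sigma_def
proof (rule the_equality)
  fix s' assume s': "s' permutes {1..n} \<and> (\<forall>x\<in>cells lam. s' (U x) = V x)"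
  show "s' = s"
  proof
    fix v
    show "s' v = s v"
    proof (cases "v \<in> {1..n}")
      case True
      then obtain x where "x \<in> cells lam" "v = U x"
        using numbering_image[OF U] by blast
      then show ?thesis
        using s' sV by simp
    next
      case False
      then show ?thesis
        using s s' by (metis permutes_not_in)
    qed
  qed
qed (use s sV in simp)

lemma sigma_exists:
  assumes U: "numbering n lam U" and V: "numbering n lam V"
  shows "\<exists>s. s permutes {1..n} \<and> (\<forall>x\<in>cells lam. s (U x) = V x)"
proof -
  define s where "s = (\<lambda>v. if v \<in> {1..n} then V (inv_into (cells lam) U v) else v)"
  have "bij_betw (V \<circ> inv_into (cells lam) U) {1..n} {1..n}"
    using bij_betw_trans[OF bij_betw_inv_into[OF U[unfolded numbering_def]] V[unfolded numbering_def]] .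
  then have "bij_betw s {1..n} {1..n}"
    by (rule bij_betw_cong[THEN iffD1, rotated]) (simp add: s_def)
  then have "s permutes {1..n}"
    by (rule bij_imp_permutes) (auto simp: s_def)
  moreover have "s (U x) = V x" if "x \<in> cells lam" for x
    using that numbering_image[OF U] numbering_inj[OF U] by (auto simp: s_def)
  ultimately show ?thesis
    by blast
qed

lemma
  assumes "numbering n lam U" "numbering n lam V"
  shows sigma_permutes: "sigma n lam U V permutes {1..n}"
    and sigma_apply: "x \<in> cells lam \<Longrightarrow> sigma n lam U V (U x) = V x"
  using sigma_exists[OF assms] sigma_unique[OF assms(1)] by metis+

lemma cell_above:
  assumes "is_partition lam n" "(Suc r, c) \<in> cells lam" "1 \<le> r"
  shows "(r, c) \<in> cells lam"
proof -
  have "lam ! r \<le> lam ! (r - 1)"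
    using assms sorted_wrt_nth_less[of "(\<ge>)" lam "r - 1" r] unfolding is_partition_def cells_def by simp
  then show ?thesis
    using assms unfolding cells_def by auto
qed

locale numbered =
  fixes n :: nat and lam :: "nat list" and S :: "nat \<times> nat \<Rightarrow> nat"
  assumes numbering_S: "numbering n lam S"
begin

abbreviation R :: "nat \<Rightarrow> nat set" where "R r \<equiv> row_entries lam S r"

lemma row_entries_subset: "R r \<subseteq> {1..n}"
  using numbering_image[OF numbering_S] unfolding row_entries_def by blast

lemma finite_row_entries: "finite (R r)"
  using row_entries_subset finite_subset by blast

lemma in_row_entries_iff: "x \<in> cells lam \<Longrightarrow> S x \<in> R r \<longleftrightarrow> fst x = r"
  unfolding row_entries_def using numbering_eq_iff[OF numbering_S] by (auto simp: image_iff)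

lemma in_col_entries_iff: "x \<in> cells lam \<Longrightarrow> S x \<in> col_entries lam S c \<longleftrightarrow> snd x = c"
  unfolding col_entries_def using numbering_eq_iff[OF numbering_S] by (auto simp: image_iff)

lemma row_entries_disjoint: "r \<noteq> r' \<Longrightarrow> R r \<inter> R r' = {}"
  unfolding row_entries_def using numbering_eq_iff[OF numbering_S] by auto

lemma set_cols_of: "set (cols_of lam S r Y) = {c. (r,c) \<in> cells lam \<and> S (r,c) \<in> Y}"
proof -
  have "{c. (r,c) \<in> cells lam \<and> S (r,c) \<in> Y} \<subseteq> {1..lam!(r-1)}"
    by (auto simp: cells_def)
  then show ?thesis
    unfolding cols_of_def using finite_subset by fastforce
qed

lemma distinct_cols_of: "distinct (cols_of lam S r Y)"
  unfolding cols_of_def by simp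

lemma cols_of_nth:
  "j < length (cols_of lam S r Y) \<Longrightarrow> (r, cols_of lam S r Y ! j) \<in> cells lam \<and> S (r, cols_of lam S r Y ! j) \<in> Y"
  using set_cols_of nth_mem by blast

lemma cols_of_cover:
  assumes "Y \<subseteq> R r" "v \<in> Y"
  shows "\<exists>j < length (cols_of lam S r Y). v = S (r, cols_of lam S r Y ! j)"
proof -
  obtain x where x: "x \<in> cells lam" "fst x = r" "v = S x"
    using assms unfolding row_entries_def by blast
  then have "snd x \<in> set (cols_of lam S r Y)"
    using assms(2) by (cases x) (auto simp: set_cols_of)
  then show ?thesis
    using x by (metis in_set_conv_nth prod.collapse)
qed

lemma length_cols_of:
  assumes Y: "Y \<subseteq> R r"
  shows "length (cols_of lam S r Y) = card Y"
proof -
  have "bij_betw (\<lambda>c. S (r,c)) (set (cols_of lam S r Y)) Y"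
    unfolding bij_betw_def
  proof
    show "inj_on (\<lambda>c. S (r, c)) (set (cols_of lam S r Y))"
      using numbering_eq_iff[OF numbering_S] by (auto simp: inj_on_def set_cols_of)
    show "(\<lambda>c. S (r, c)) ` set (cols_of lam S r Y) = Y"
      using cols_of_cover[OF Y] cols_of_nth by (fastforce simp: in_set_conv_nth)
  qed
  then show ?thesis
    using bij_betw_same_card distinct_card[OF distinct_cols_of] by metis
qed

lemma col_transposition:
  assumes "x \<in> cells lam" "y \<in> cells lam" "snd x = snd y"
  shows "transpose (S x) (S y) \<in> col_group n lam S"
proof -
  have "S x \<in> {1..n}" "S y \<in> {1..n}"
    using assms numbering_image[OF numbering_S] by blast+
  then have "transpose (S x) (S y) \<in> perms n"
    unfolding perms_def by (simp add: permutes_swap_id)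
  moreover have "S x \<in> col_entries lam S c \<longleftrightarrow> S y \<in> col_entries lam S c" for c
    using assms by (simp add: in_col_entries_iff)
  ultimately show ?thesis
    unfolding col_group_def by auto
qed

end

subsection \<open>Exchanging entries of rows i and i+1\<close>

lemma the_index_nth: "distinct xs \<Longrightarrow> j < length xs \<Longrightarrow> (THE k. k < length xs \<and> xs ! k = xs ! j) = j"
  by (rule the_equality) (auto simp: nth_eq_iff_index_eq)

locale row_swap = numbered +
  fixes i :: nat and A B :: "nat set"
  assumes A_subset: "A \<subseteq> R (Suc i)" and B_subset: "B \<subseteq> R i" and card_eq: "card A = card B"
begin

abbreviation cA where "cA \<equiv> cols_of lam S (Suc i) A"
abbreviation cB where "cB \<equiv> cols_of lam S i B"

lemma length_cA_cB: "length cA = length cB"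
  using length_cols_of[OF A_subset] length_cols_of[OF B_subset] card_eq by simp

lemma swap_num_row: "j < length cB \<Longrightarrow> swap_num lam i S A B (i, cB ! j) = S (Suc i, cA ! j)"
  unfolding swap_num_def Let_def using the_index_nth[OF distinct_cols_of] by simp

lemma swap_num_next_row: "j < length cA \<Longrightarrow> swap_num lam i S A B (Suc i, cA ! j) = S (i, cB ! j)"
  unfolding swap_num_def Let_def using the_index_nth[OF distinct_cols_of] by simp

lemma swap_num_other:
  "\<not> (r = i \<and> c \<in> set cB) \<Longrightarrow> \<not> (r = Suc i \<and> c \<in> set cA) \<Longrightarrow> swap_num lam i S A B (r, c) = S (r, c)"
  unfolding swap_num_def Let_def by auto

definition swap_perm :: "nat \<Rightarrow> nat" where
  "swap_perm = (\<lambda>v. if v \<in> {1..n} then swap_num lam i S A B (inv_into (cells lam) S v) else v)"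

lemma swap_perm_S: "x \<in> cells lam \<Longrightarrow> swap_perm (S x) = swap_num lam i S A B x"
  unfolding swap_perm_def using numbering_image[OF numbering_S] numbering_inj[OF numbering_S] by auto

lemma swap_perm_B: "v \<in> B \<Longrightarrow> swap_perm v \<in> A \<and> swap_perm (swap_perm v) = v"
proof -
  assume "v \<in> B"
  then obtain j where j: "j < length cB" "v = S (i, cB ! j)"
    using cols_of_cover[OF B_subset] by blast
  then have "(i, cB ! j) \<in> cells lam" "(Suc i, cA ! j) \<in> cells lam" "S (Suc i, cA ! j) \<in> A"
    using cols_of_nth length_cA_cB by auto
  then show ?thesis
    using j length_cA_cB by (simp add: swap_perm_S swap_num_row swap_num_next_row)
qed

lemma swap_perm_A: "v \<in> A \<Longrightarrow> swap_perm v \<in> B \<and> swap_perm (swap_perm v) = v"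
proof -
  assume "v \<in> A"
  then obtain j where j: "j < length cA" "v = S (Suc i, cA ! j)"
    using cols_of_cover[OF A_subset] by blast
  then have "(Suc i, cA ! j) \<in> cells lam" "(i, cB ! j) \<in> cells lam" "S (i, cB ! j) \<in> B"
    using cols_of_nth length_cA_cB by auto
  then show ?thesis
    using j length_cA_cB by (simp add: swap_perm_S swap_num_row swap_num_next_row)
qed

lemma swap_perm_other: "v \<notin> A \<Longrightarrow> v \<notin> B \<Longrightarrow> swap_perm v = v"
proof (cases "v \<in> {1..n}")
  case True
  assume v: "v \<notin> A" "v \<notin> B"
  obtain r c where rc: "(r, c) \<in> cells lam" "v = S (r, c)"
    using True numbering_image[OF numbering_S] by (metis image_iff prod.collapse)
  then have "\<not> (r = i \<and> c \<in> set cB)" "\<not> (r = Suc i \<and> c \<in> set cA)"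
    using v by (auto simp: set_cols_of)
  then show ?thesis
    using rc swap_num_other swap_perm_S by simp
qed (auto simp: swap_perm_def)

lemma swap_perm_permutes: "swap_perm permutes (A \<union> B)"
proof (rule bij_imp_permutes)
  have "swap_perm (swap_perm v) = v" for v
    using swap_perm_A swap_perm_B swap_perm_other by metis
  moreover have "swap_perm ` (A \<union> B) \<subseteq> A \<union> B"
    using swap_perm_A swap_perm_B by auto
  ultimately show "bij_betw swap_perm (A \<union> B) (A \<union> B)"
    by (intro bij_betw_byWitness[where f' = swap_perm]) auto
qed (simp add: swap_perm_other)

lemma swap_perm_image_row: "swap_perm ` R i = (R i - B) \<union> A"
proof
  have AR: "A \<inter> R i = {}"
    using A_subset row_entries_disjoint[of "Suc i" i] by auto
  show "swap_perm ` R i \<subseteq> (R i - B) \<union> A"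
  proof
    fix w assume "w \<in> swap_perm ` R i"
    then obtain v where v: "v \<in> R i" "w = swap_perm v"
      by blast
    moreover have "v \<notin> A"
      using AR v(1) by blast
    ultimately show "w \<in> (R i - B) \<union> A"
      using swap_perm_B swap_perm_other by (cases "v \<in> B") auto
  qed
  show "(R i - B) \<union> A \<subseteq> swap_perm ` R i"
  proof
    fix w assume w: "w \<in> (R i - B) \<union> A"
    show "w \<in> swap_perm ` R i"
    proof (cases "w \<in> A")
      case True
      then show ?thesis
        using swap_perm_A B_subset by (metis image_eqI subsetD)
    next
      case False
      then show ?thesis
        using w swap_perm_other by (metis DiffD1 DiffD2 UnE image_eqI)
    qed
  qed
qed

lemma swap_perm_permutes_entries: "swap_perm permutes {1..n}"
  using swap_perm_permutes A_subset B_subset row_entries_subset by (blast intro: permutes_subset)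

lemma numbering_swap_num: "numbering n lam (swap_num lam i S A B)"
proof -
  have "bij_betw (swap_perm \<circ> S) (cells lam) {1..n}"
    using bij_betw_trans[OF numbering_S[unfolded numbering_def] permutes_imp_bij[OF swap_perm_permutes_entries]] .
  then show ?thesis
    unfolding numbering_def by (rule bij_betw_cong[THEN iffD1, rotated]) (simp add: swap_perm_S)
qed

lemma sigma_swap_num: "sigma n lam S (swap_num lam i S A B) = swap_perm"
  using sigma_unique[OF numbering_S swap_perm_permutes_entries] swap_perm_S by blast

end

subsection \<open>The Garnir relation\<close>

lemma garnir_vanishing:
  assumes X: "X \<subseteq> {1..n}" and \<rho>: "\<rho> \<in> perms n" and xy: "x \<in> X" "y \<in> X" "\<rho> x \<noteq> \<rho> y"
    and col: "transpose (\<rho> x) (\<rho> y) \<in> col_group n lam S"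
  shows "gmult n (gmult n (b_elt n lam S) (delta \<rho>)) (indicator {g. g permutes X}) = 0"
proof -
  let ?b = "b_elt n lam S" and ?e = "indicator {g. g permutes X} :: galg"
  let ?t = "transpose x y" and ?c = "transpose (\<rho> x) (\<rho> y)"
  have t: "?t permutes X"
    using xy by (intro permutes_swap_id)
  have tn: "?t \<in> perms n"
    using permutes_subset[OF t X] unfolding perms_def by simp
  have cn: "?c \<in> perms n"
    using col stabiliser_perms by (auto simp: col_group_stabiliser)
  have "?c \<circ> \<rho> = \<rho> \<circ> ?t"
    using transpose_comp_eq[OF perms_bij[OF \<rho>]] perms_bij[OF \<rho>] by (simp add: bij_is_inj)
  define Z where "Z = gmult n (gmult n ?b (delta \<rho>)) ?e"
  have "Z = gmult n ?b (gmult n (delta \<rho>) (gmult n (delta ?t) ?e))"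
    unfolding Z_def gmult_delta_indicator_permutes[OF X t] by (simp add: gmult_assoc)
  also have "\<dots> = gmult n (gmult n ?b (delta (?c \<circ> \<rho>))) ?e"
    by (simp add: gmult_assoc[symmetric] gmult_delta_delta \<rho> tn \<open>?c \<circ> \<rho> = \<rho> \<circ> ?t\<close>)
  also have "\<dots> = gmult n (gmult n (gmult n ?b (delta ?c)) (delta \<rho>)) ?e"
    by (simp add: gmult_assoc gmult_delta_delta \<rho> cn)
  also have "\<dots> = - Z"
    unfolding Z_def gmult_b_elt_col_transposition[OF xy(3) col] by (simp add: gmult_uminus_left)
  finally show ?thesis
    unfolding Z_def[symmetric] by (simp add: fun_eq_iff)
qed

locale garnir_setting = numbered +
  fixes i :: nat and Q :: "nat set"
  assumes partition: "is_partition lam n" and row_index: "1 \<le> i"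
    and Q_subset: "Q \<subseteq> R (Suc i)" and Q_nonempty: "Q \<noteq> {}"
begin

definition X :: "nat set" where "X = R i \<union> Q"

definition H :: "(nat \<Rightarrow> nat) set" where "H = {h. h permutes X \<and> h ` R i = R i}"

abbreviation tau :: "(nat \<times> nat \<Rightarrow> nat) \<Rightarrow> nat \<Rightarrow> nat" where "tau U \<equiv> sigma n lam S U"

definition coset_sum :: galg where "coset_sum = (\<Sum>U\<in>Xi lam i Q S. delta (inv (tau U)))"

lemma Q_disjoint: "Q \<inter> R i = {}"
  using Q_subset row_entries_disjoint[of "Suc i" i] by auto

lemma X_subset: "X \<subseteq> {1..n}"
  using row_entries_subset Q_subset unfolding X_def by blast

lemma permutes_X_perms: "p permutes X \<Longrightarrow> p \<in> perms n"
  unfolding perms_def using X_subset permutes_subset by blast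

lemma Xi_cases:
  assumes "U \<in> Xi lam i Q S"
  obtains A B where "row_swap n lam S i A B" "A \<subseteq> Q" "U = swap_num lam i S A B"
proof -
  obtain A B where AB: "A \<subseteq> Q" "B \<subseteq> R i" "card A = card B" "U = swap_num lam i S A B"
    using assms unfolding Xi_def by blast
  moreover have "row_swap n lam S i A B"
    using AB Q_subset by unfold_locales auto
  ultimately show thesis
    using that by blast
qed

lemma Xi_tau:
  assumes "U \<in> Xi lam i Q S"
  shows "numbering n lam U" "tau U permutes X" "row_entries lam U i = tau U ` R i"
proof -
  obtain A B where AB: "row_swap n lam S i A B" "A \<subseteq> Q" "U = swap_num lam i S A B"
    using assms by (rule Xi_cases)
  interpret row_swap n lam S i A B
    by (fact AB(1))
  have tau_eq: "tau U = swap_perm"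
    unfolding AB(3) by (rule sigma_swap_num)
  show "numbering n lam U"
    unfolding AB(3) by (rule numbering_swap_num)
  have "A \<union> B \<subseteq> X"
    using AB(2) B_subset unfolding X_def by blast
  with swap_perm_permutes show "tau U permutes X"
    unfolding tau_eq by (rule permutes_subset)
  have "U x = tau U (S x)" if "x \<in> cells lam" for x
    unfolding tau_eq unfolding AB(3) using that by (rule swap_perm_S[symmetric])
  then show "row_entries lam U i = tau U ` R i"
    by (rule row_entries_conj)
qed

lemma tau_perms: "U \<in> Xi lam i Q S \<Longrightarrow> tau U \<in> perms n"
  using Xi_tau(2) permutes_X_perms by blast

lemma Xi_row_entries:
  assumes "U \<in> Xi lam i Q S"
  obtains A B where "A \<subseteq> Q" "B \<subseteq> R i" "U = swap_num lam i S A B" "row_entries lam U i = (R i - B) \<union> A"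
proof -
  obtain A B where AB: "row_swap n lam S i A B" "A \<subseteq> Q" "U = swap_num lam i S A B"
    using assms by (rule Xi_cases)
  interpret row_swap n lam S i A B
    by (fact AB(1))
  show ?thesis
    using that AB B_subset Xi_tau(3)[OF assms] sigma_swap_num swap_perm_image_row by simp
qed

lemma Xi_row_entries_inj: "inj_on (\<lambda>U. row_entries lam U i) (Xi lam i Q S)"
proof
  fix U U' assume U: "U \<in> Xi lam i Q S" and U': "U' \<in> Xi lam i Q S"
    and eq: "row_entries lam U i = row_entries lam U' i"
  obtain A B where AB: "A \<subseteq> Q" "B \<subseteq> R i" "U = swap_num lam i S A B" "row_entries lam U i = (R i - B) \<union> A"
    using U by (rule Xi_row_entries)
  obtain A' B' where AB': "A' \<subseteq> Q" "B' \<subseteq> R i" "U' = swap_num lam i S A' B'"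
    "row_entries lam U' i = (R i - B') \<union> A'"
    using U' by (rule Xi_row_entries)
  have "A = row_entries lam U i - R i" "B = R i - row_entries lam U i"
    using AB(1,2,4) Q_disjoint by blast+
  moreover have "A' = row_entries lam U' i - R i" "B' = R i - row_entries lam U' i"
    using AB'(1,2,4) Q_disjoint by blast+
  ultimately have "A = A'" "B = B'"
    using eq by simp_all
  then show "U = U'"
    using AB(3) AB'(3) by simp
qed

lemma Xi_row_entries_surj:
  assumes Y: "Y \<subseteq> X" "card Y = card (R i)"
  shows "\<exists>U\<in>Xi lam i Q S. row_entries lam U i = Y"
proof -
  define A where "A = Y \<inter> Q"
  define B where "B = R i - Y"
  have "finite Y"
    using finite_subset[OF Y(1) finite_subset[OF X_subset]] by simp
  then have fin: "finite (Y \<inter> R i)" "finite A"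
    unfolding A_def by simp_all
  have "Y = (Y \<inter> R i) \<union> A" "(Y \<inter> R i) \<inter> A = {}"
    using Y(1) Q_disjoint unfolding A_def X_def by blast+
  then have "card Y = card (Y \<inter> R i) + card A"
    using card_Un_disjoint[OF fin] by metis
  moreover have "card (R i) = card (Y \<inter> R i) + card B"
    using card_Int_Diff[OF finite_row_entries, of i Y] unfolding B_def by (simp add: Int_commute)
  ultimately have card: "card A = card B"
    using Y(2) by simp
  have "row_swap n lam S i A B"
    using numbering_S Q_subset card unfolding row_swap_def row_swap_axioms_def numbered_def A_def B_def
    by blast
  then interpret row_swap n lam S i A B .
  have U: "swap_num lam i S A B \<in> Xi lam i Q S"
    unfolding Xi_def using card A_def B_def by blast
  have "row_entries lam (swap_num lam i S A B) i = swap_perm ` R i"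
    using Xi_tau(3)[OF U] by (simp only: sigma_swap_num)
  also have "\<dots> = Y"
    unfolding swap_perm_image_row using Y(1) unfolding A_def B_def X_def by blast
  finally show ?thesis
    using U by blast
qed

lemma finite_Xi: "finite (Xi lam i Q S)"
proof -
  have "Xi lam i Q S \<subseteq> (\<lambda>(A, B). swap_num lam i S A B) ` (Pow Q \<times> Pow (R i))"
    unfolding Xi_def by blast
  moreover have "finite (Pow Q \<times> Pow (R i))"
    using Q_subset finite_row_entries finite_subset by (simp add: finite_subset)
  ultimately show ?thesis
    by (metis finite_imageI finite_subset)
qed

lemma H_subset_row_group: "H \<subseteq> row_group n lam S"
proof
  fix h assume "h \<in> H"
  then have h: "h permutes X" "h ` R i = R i"
    unfolding H_def by auto
  have "h ` Q = Q"
  proof -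
    have "Q = X - R i"
      unfolding X_def using Q_disjoint by blast
    then show ?thesis
      using h image_set_diff[OF permutes_inj[OF h(1)], of X "R i"] permutes_image[OF h(1)] by simp
  qed
  moreover have "X \<inter> R r = (if r = i then R i else if r = Suc i then Q else {})" for r
    using Q_subset row_entries_disjoint[of r i] row_entries_disjoint[of r "Suc i"]
    unfolding X_def by auto
  ultimately have "h ` (X \<inter> R r) = X \<inter> R r" for r
    using h(2) by simp
  then have "h ` R r = R r" for r
    by (rule permutes_image_eq[OF h(1)])
  then show "h \<in> row_group n lam S"
    using permutes_X_perms[OF h(1)] unfolding row_group_def by simp
qed

lemma card_Xi_coset:
  assumes g: "g \<in> perms n"
  shows "card {U \<in> Xi lam i Q S. g \<circ> tau U \<in> H} = (if g permutes X then 1 else 0)"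
proof (cases "g permutes X")
  case gX: True
  have "inv g ` R i \<subseteq> X" "card (inv g ` R i) = card (R i)"
    using permutes_image[OF permutes_inv[OF gX]] card_image[OF permutes_inj_on[OF permutes_inv[OF gX]]]
    unfolding X_def by auto
  then obtain U0 where U0: "U0 \<in> Xi lam i Q S" "row_entries lam U0 i = inv g ` R i"
    using Xi_row_entries_surj by blast
  have "g \<circ> tau U \<in> H \<longleftrightarrow> U = U0" if U: "U \<in> Xi lam i Q S" for U
  proof -
    have "g \<circ> tau U \<in> H \<longleftrightarrow> g ` tau U ` R i = R i"
      using permutes_compose[OF Xi_tau(2)[OF U] gX] unfolding H_def by (simp add: image_comp)
    also have "\<dots> \<longleftrightarrow> tau U ` R i = inv g ` R i"
      by (rule permutes_image_eq_iff[OF gX])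
    also have "\<dots> \<longleftrightarrow> U = U0"
      using Xi_tau(3)[OF U] U0(2) inj_on_eq_iff[OF Xi_row_entries_inj U U0(1)] by simp
    finally show ?thesis .
  qed
  then have "{U \<in> Xi lam i Q S. g \<circ> tau U \<in> H} = {U0}"
    using U0(1) by blast
  then show ?thesis
    using gX by simp
next
  case gX: False
  have "g \<circ> tau U \<notin> H" if U: "U \<in> Xi lam i Q S" for U
  proof
    assume "g \<circ> tau U \<in> H"
    then have "g \<circ> tau U \<circ> inv (tau U) permutes X"
      using permutes_compose[OF permutes_inv[OF Xi_tau(2)[OF U]]] unfolding H_def by blast
    then show False
      using gX tau_perms[OF U] by (simp add: perms_inv_cancel)
  qed
  then have "{U \<in> Xi lam i Q S. g \<circ> tau U \<in> H} = {}"
    by blast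
  then show ?thesis
    using gX by (simp only: card.empty if_False)
qed

lemma gmult_indicator_coset_sum: "gmult n (indicator H) coset_sum = indicator {g. g permutes X}"
proof
  fix g
  show "gmult n (indicator H) coset_sum g = indicator {g. g permutes X} g"
  proof (cases "g \<in> perms n")
    case True
    then show ?thesis
      unfolding coset_sum_def
      by (simp add: gmult_indicator_sum_delta_inv finite_Xi tau_perms card_Xi_coset indicator_def)
  next
    case False
    then show ?thesis
      using permutes_X_perms by (auto simp: gmult_outside indicator_def)
  qed
qed

lemma garnir_row_group:
  assumes \<rho>: "\<rho> \<in> row_group n lam S"
  shows "gmult n (gmult n (b_elt n lam S) (delta \<rho>)) (indicator {g. g permutes X}) = 0"
proof -
  have \<rho>n: "\<rho> \<in> perms n"
    using \<rho> unfolding row_group_def by blast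
  have \<rho>R: "\<rho> ` R r = R r" "inv \<rho> ` R r = R r" for r
    using \<rho> stabiliser_inv[of \<rho> n "row_entries lam S"] unfolding row_group_stabiliser stabiliser_def by auto
  obtain q where q: "q \<in> Q"
    using Q_nonempty by blast
  then have "\<rho> q \<in> R (Suc i)"
    using Q_subset \<rho>R(1)[of "Suc i"] by blast
  then obtain y where y: "y \<in> cells lam" "fst y = Suc i" "\<rho> q = S y"
    unfolding row_entries_def by blast
  then obtain c where c: "(Suc i, c) \<in> cells lam" "\<rho> q = S (Suc i, c)"
    by (metis prod.collapse)
  have ic: "(i, c) \<in> cells lam"
    using cell_above[OF partition c(1) row_index] .
  define x where "x = inv \<rho> (S (i, c))"
  have \<rho>x: "\<rho> x = S (i, c)"
    unfolding x_def by (rule surj_f_inv_f[OF bij_is_surj[OF perms_bij[OF \<rho>n]]])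
  have "S (i, c) \<in> R i"
    using ic by (simp add: in_row_entries_iff)
  then have "x \<in> X"
    using \<rho>R(2)[of i] unfolding x_def X_def by blast
  moreover have "q \<in> X"
    using q unfolding X_def by blast
  moreover have "\<rho> x \<noteq> \<rho> q"
    using numbering_eq_iff[OF numbering_S ic c(1)] \<rho>x c(2) by simp
  moreover have "transpose (\<rho> x) (\<rho> q) \<in> col_group n lam S"
    unfolding \<rho>x c(2) using ic c(1) by (rule col_transposition) simp
  ultimately show ?thesis
    by (rule garnir_vanishing[OF X_subset \<rho>n])
qed

lemma b_elt_a_elt_indicator_permutes:
  "gmult n (b_elt n lam S) (gmult n (a_elt n lam S) (indicator {g. g permutes X})) = 0"
proof -
  have "gmult n (b_elt n lam S) (gmult n (a_elt n lam S) (indicator {g. g permutes X}))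
      = (\<Sum>\<rho>\<in>row_group n lam S. gmult n (gmult n (b_elt n lam S) (delta \<rho>)) (indicator {g. g permutes X}))"
    unfolding a_elt_indicator row_group_stabiliser indicator_stabiliser_sum_delta
    by (simp add: gmult_sum_left gmult_sum_right gmult_assoc)
  also have "\<dots> = 0"
    using garnir_row_group by simp
  finally show ?thesis .
qed

lemma card_H_nonzero: "card H \<noteq> 0"
proof -
  have "H \<subseteq> perms n"
    using H_subset_row_group stabiliser_perms unfolding row_group_stabiliser by blast
  moreover have "id \<in> H"
    unfolding H_def by simp
  ultimately show ?thesis
    using finite_subset[OF _ finite_perms] by (auto simp: card_eq_0_iff)
qed

lemma b_elt_a_elt_coset_sum: "gmult n (b_elt n lam S) (gmult n (a_elt n lam S) coset_sum) = 0"
proof -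
  have scale: "gmult n (a_elt n lam S) (indicator {g. g permutes X})
      = (\<lambda>g. of_nat (card H) * gmult n (a_elt n lam S) coset_sum g)"
    unfolding gmult_indicator_coset_sum[symmetric] gmult_assoc[symmetric] a_elt_indicator row_group_stabiliser
      gmult_indicator_stabiliser[OF H_subset_row_group[unfolded row_group_stabiliser]]
    by (rule gmult_scale_left)
  have "(\<lambda>g. of_nat (card H) * gmult n (b_elt n lam S) (gmult n (a_elt n lam S) coset_sum) g)
      = gmult n (b_elt n lam S) (gmult n (a_elt n lam S) (indicator {g. g permutes X}))"
    unfolding scale gmult_scale_right ..
  also have "\<dots> = 0"
    by (rule b_elt_a_elt_indicator_permutes)
  finally show ?thesis
    using card_H_nonzero by (simp add: fun_eq_iff)
qed

lemma gamma_eq: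
  assumes T: "numbering n lam T"
  shows "gamma n lam i Q T S = gmult n (delta (sigma n lam S T)) (gmult n (a_elt n lam S) coset_sum)"
proof -
  let ?s = "sigma n lam S T"
  have s: "?s \<in> perms n"
    using sigma_permutes[OF numbering_S T] unfolding perms_def by simp
  have "gmult n (delta (sigma n lam U T)) (a_elt n lam U)
      = gmult n (delta ?s) (gmult n (a_elt n lam S) (delta (inv (tau U))))" if U: "U \<in> Xi lam i Q S" for U
  proof -
    have t: "inv (tau U) \<in> perms n"
      using perms_inv[OF tau_perms[OF U]] .
    have "S x = inv (tau U) (U x)" if "x \<in> cells lam" for x
      using that sigma_apply[OF numbering_S Xi_tau(1)[OF U]] perms_bij[OF tau_perms[OF U]]
      by (simp add: bij_inv_eq_iff)
    then have conj: "gmult n (delta (inv (tau U))) (a_elt n lam U) = gmult n (a_elt n lam S) (delta (inv (tau U)))"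
      by (rule a_elt_conj[OF t])
    have "sigma n lam U T = ?s \<circ> inv (tau U)"
    proof (rule sigma_unique[OF Xi_tau(1)[OF U]])
      show "?s \<circ> inv (tau U) permutes {1..n}"
        using perms_comp[OF s t] unfolding perms_def by simp
      show "(?s \<circ> inv (tau U)) (U x) = T x" if "x \<in> cells lam" for x
        using that \<open>\<And>x. x \<in> cells lam \<Longrightarrow> S x = inv (tau U) (U x)\<close> sigma_apply[OF numbering_S T] by simp
    qed
    then show ?thesis
      by (simp add: gmult_delta_delta[OF s t, symmetric] gmult_assoc conj)
  qed
  then show ?thesis
    unfolding gamma_def coset_sum_def gmult_sum_right by (rule sum.cong[OF refl])
qed

end

theorem lemma2p14:
  fixes n i :: nat and lam :: "nat list" and S T :: "nat \<times> nat \<Rightarrow> nat" and Q :: "nat set"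
  assumes "is_partition lam n"
    and "numbering n lam S" and "numbering n lam T"
    and "1 \<le> i" and "i \<le> length lam - 1"
    and "Q \<subseteq> row_entries lam S (Suc i)" and "Q \<noteq> {}"
  shows "gamma n lam i Q T S \<in> ker_Psi n lam T"
proof -
  interpret garnir_setting n lam S i Q
    using assms by unfold_locales auto
  let ?s = "sigma n lam S T"
  have s: "?s \<in> perms n"
    using sigma_permutes[OF assms(2,3)] unfolding perms_def by simp
  have T: "\<And>x. x \<in> cells lam \<Longrightarrow> T x = ?s (S x)"
    using sigma_apply[OF assms(2,3)] by simp
  have "gamma n lam i Q T S = gmult n (a_elt n lam T) (gmult n (delta ?s) coset_sum)"
    by (simp add: gamma_eq[OF assms(3)] a_elt_conj[OF s T] gmult_assoc[symmetric])
  then have "gamma n lam i Q T S \<in> Mt n lam T"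
    unfolding Mt_def CS_def by (auto simp: gmult_def)
  moreover have "Psi n lam T (gamma n lam i Q T S) = 0"
    unfolding Psi_def gamma_eq[OF assms(3)]
    by (simp add: gmult_assoc[symmetric] b_elt_conj[OF s T, symmetric])
      (simp add: gmult_assoc b_elt_a_elt_coset_sum gmult_zero_right)
  ultimately show ?thesis
    unfolding ker_Psi_def by simp
qed

end
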